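(* Let $m,p,n$ be positive integers with $p\mid m$. Any two distinct $p$-connected elements of $G(m,p,n)$ are incomparable in the codimension order.
   Context: $\zeta_m=e^{2\pi i/m}$. $G(m,1,n)$ is the group of $n\times n$ monomial matrices whose nonzero entries are $m$-th roots of unity, acting on $V=\mathbb{C}^n$; for $p\mid m$, $G(m,p,n)$ is the subgroup of those elements whose nonzero entries multiply to an $(m/p)$-th root of unity. $\operatorname{codim}(g)=n-\dim\{v\in V:gv=v\}$, and the codimension order is $a\le_\perp c$ iff $\operatorname{codim}(a)+\operatorname{codim}(a^{-1}c)=\operatorname{codim}(c)$. A diagonal matrix $g\ne 1$ in $G(m,1,n)$ whose non-1 eigenvalues (with multiplicity) are $\zeta_m^{c_1},\dots,\zeta_m^{c_k}$ is called $p$-connected if $p$ divides $c_1+\dots+c_k$ but $p$ does not divide $\sum_{i\in I}c_i$ for any nonempty proper subset $I\subsetneq\{1,\dots,k\}$ (the exponents are defined mod $m$, and $p\mid m$, so this is well defined). *)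

theory Defs
  imports "Jordan_Normal_Form.Matrix_Kernel" "Jordan_Normal_Form.Gauss_Jordan_Elimination"
begin

definition zeta :: "nat \<Rightarrow> complex" where
  "zeta m = cis (2 * pi / real m)"

definition G_m1n :: "nat \<Rightarrow> nat \<Rightarrow> complex mat set" where
  "G_m1n m n = {g \<in> carrier_mat n n.
      (\<forall>i<n. \<exists>!j. j < n \<and> g $$ (i,j) \<noteq> 0) \<and>
      (\<forall>j<n. \<exists>!i. i < n \<and> g $$ (i,j) \<noteq> 0) \<and>
      (\<forall>i<n. \<forall>j<n. g $$ (i,j) \<noteq> 0 \<longrightarrow> g $$ (i,j) ^ m = 1)}"

definition nonzero_entry_prod :: "complex mat \<Rightarrow> complex" where
  "nonzero_entry_prod g =
     (\<Prod>ij \<in> {ij \<in> {0..<dim_row g} \<times> {0..<dim_col g}. g $$ ij \<noteq> 0}. g $$ ij)"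

definition G_mpn :: "nat \<Rightarrow> nat \<Rightarrow> nat \<Rightarrow> complex mat set" where
  "G_mpn m p n = {g \<in> G_m1n m n. nonzero_entry_prod g ^ (m div p) = 1}"

text \<open>codim g = n - dim {v. g v = v}; the fixed space is the kernel of g - 1.\<close>
definition codim :: "complex mat \<Rightarrow> nat" where
  "codim g = dim_row g - kernel_dim (g - 1\<^sub>m (dim_row g))"

definition codim_le :: "complex mat \<Rightarrow> complex mat \<Rightarrow> bool" where
  "codim_le a c \<longleftrightarrow> codim a + codim (the (mat_inverse a) * c) = codim c"

definition p_connected :: "nat \<Rightarrow> nat \<Rightarrow> complex mat \<Rightarrow> bool" where
  "p_connected m p g \<longleftrightarrow>
     (let S = {i. i < dim_row g \<and> g $$ (i,i) \<noteq> 1} in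
      diagonal_mat g \<and> g \<noteq> 1\<^sub>m (dim_row g) \<and>
      (\<exists>c :: nat \<Rightarrow> nat.
          (\<forall>i\<in>S. g $$ (i,i) = zeta m ^ c i) \<and>
          p dvd (\<Sum>i\<in>S. c i) \<and>
          (\<forall>I. I \<noteq> {} \<longrightarrow> I \<subset> S \<longrightarrow> \<not> p dvd (\<Sum>i\<in>I. c i))))"

end

theory Submission
  imports Defs
begin

text \<open>For a diagonal matrix the codimension counts the diagonal entries different from 1.
  The support of \<open>c\<close> lies in the union of the supports of \<open>a\<close> and \<open>a\<inverse> c\<close>, so
  \<open>a \<le> c\<close> forces these two supports to be disjoint: \<open>c\<close> agrees with \<open>a\<close> on the support
  of \<open>a\<close>. Agreeing entries have exponents congruent modulo \<open>m\<close>, hence modulo \<open>p\<close>, so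
  the exponents of \<open>c\<close> over the support of \<open>a\<close> sum to \<open>0\<close> modulo \<open>p\<close>; by
  \<open>p\<close>-connectedness of \<open>c\<close> the two supports coincide, and then \<open>a = c\<close>.\<close>

lemma diagonal_mat_eq_mat_diag:
  assumes "A \<in> carrier_mat n n" and "diagonal_mat A"
  shows "A = mat_diag n (\<lambda>i. A $$ (i,i))"
  using assms by (intro eq_matI) (auto simp: mat_diag_def diagonal_mat_def)

lemma dim_mat_diag [simp]:
  "dim_row (mat_diag n f) = n" "dim_col (mat_diag n f) = n"
  by (simp_all add: mat_diag_def)

lemma mat_diag_mult_vec:
  assumes "v \<in> carrier_vec n"
  shows "mat_diag n f *\<^sub>v v = vec n (\<lambda>i. f i * v $ i)"
proof (rule eq_vecI)
  fix i assume "i < dim_vec (vec n (\<lambda>i. f i * v $ i))"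
  hence i: "i < n" by simp
  have "(mat_diag n f *\<^sub>v v) $ i = (\<Sum>j<n. (if i = j then f j else 0) * v $ j)"
    using assms i by (simp add: mat_diag_def scalar_prod_def atLeast0LessThan)
  also have "\<dots> = (\<Sum>j<n. if j = i then f i * v $ i else 0)" by (intro sum.cong) auto
  also have "\<dots> = f i * v $ i" using i by simp
  finally show "(mat_diag n f *\<^sub>v v) $ i = vec n (\<lambda>i. f i * v $ i) $ i" using i by simp
qed (use assms in auto)

lemma mat_kernel_mat_diag:
  fixes f :: "nat \<Rightarrow> 'a :: field"
  shows "mat_kernel (mat_diag n f) = {v \<in> carrier_vec n. \<forall>i<n. f i \<noteq> 0 \<longrightarrow> v $ i = 0}"
proof -
  have "mat_diag n f *\<^sub>v v = 0\<^sub>v n \<longleftrightarrow> (\<forall>i<n. f i \<noteq> 0 \<longrightarrow> v $ i = 0)"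
    if "v \<in> carrier_vec n" for v
    using that by (auto simp: mat_diag_mult_vec vec_eq_iff)
  thus ?thesis by (auto simp: mat_kernel[OF mat_diag_dim])
qed

lemma (in vec_space) unit_vec_image_span:
  assumes Z: "Z \<subseteq> {..<n}" and v: "v \<in> carrier_vec n"
    and v_Z: "\<And>i. i < n \<Longrightarrow> i \<notin> Z \<Longrightarrow> v $ i = 0"
  shows "v \<in> span (unit_vec n ` Z)"
proof -
  have inj: "inj_on (unit_vec n :: nat \<Rightarrow> 'a vec) Z"
    using Z by (auto simp: inj_on_def unit_vec_eq)
  have fin_Z: "finite Z" using Z finite_nat_iff_bounded by blast
  have carrier: "unit_vec n ` Z \<subseteq> carrier_vec n" by auto
  define a where "a u = v $ (THE i. u = unit_vec n i)" for u :: "'a vec"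
  have "lincomb a (unit_vec n ` Z) = v"
  proof (rule eq_vecI)
    fix i assume "i < dim_vec v"
    hence i: "i < n" using v by simp
    have "lincomb a (unit_vec n ` Z) $ i = (\<Sum>u\<in>unit_vec n ` Z. a u * u $ i)"
      by (rule lincomb_index[OF i carrier])
    also have "\<dots> = (\<Sum>j\<in>Z. a (unit_vec n j) * unit_vec n j $ i)"
      unfolding sum.reindex[OF inj] by simp
    also have "\<dots> = (\<Sum>j\<in>Z. if j = i then v $ i else 0)"
    proof (rule sum.cong[OF refl])
      fix j assume j: "j \<in> Z"
      have "(THE k. unit_vec n j = (unit_vec n k :: 'a vec)) = j"
        using j Z by (intro the_equality) (auto simp: unit_vec_eq)
      thus "a (unit_vec n j) * unit_vec n j $ i = (if j = i then v $ i else 0)"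
        using i j Z unfolding a_def by auto
    qed
    also have "\<dots> = v $ i" using v_Z[OF i] fin_Z by auto
    finally show "lincomb a (unit_vec n ` Z) $ i = v $ i" .
  qed (use lincomb_dim[OF finite_imageI[OF fin_Z] carrier] v in simp)
  thus ?thesis unfolding span_def using fin_Z by blast
qed

lemma kernel_dim_mat_diag:
  fixes f :: "nat \<Rightarrow> 'a :: field"
  shows "kernel_dim (mat_diag n f) = card {i. i < n \<and> f i = 0}"
proof -
  interpret K: kernel n n "mat_diag n f" by unfold_locales (rule mat_diag_dim)
  define Z where "Z = {i. i < n \<and> f i = 0}"
  define B :: "'a vec set" where "B = unit_vec n ` Z"
  have inj: "inj_on (unit_vec n :: nat \<Rightarrow> 'a vec) Z"
    by (auto simp: inj_on_def Z_def unit_vec_eq)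
  have fin: "finite B" unfolding B_def Z_def by simp
  have B_kernel: "B \<subseteq> mat_kernel (mat_diag n f)"
    unfolding B_def Z_def mat_kernel_mat_diag by auto
  have "B \<subseteq> set (unit_vecs n)" unfolding B_def Z_def unit_vecs_def by auto
  hence indep: "\<not> K.lin_dep B"
    using K.NC.subset_li_is_li K.NC.unit_vecs_basis
    unfolding K.lindep_same[OF B_kernel] K.NC.basis_def by auto
  have "mat_kernel (mat_diag n f) \<subseteq> K.span B"
  proof
    fix v assume "v \<in> mat_kernel (mat_diag n f)"
    hence "v \<in> K.NC.span B"
      unfolding B_def by (intro K.NC.unit_vec_image_span) (auto simp: mat_kernel_mat_diag Z_def)
    thus "v \<in> K.span B" using K.span_same[OF B_kernel] by simp
  qed
  hence "K.basis B"
    unfolding K.Ker.basis_def using indep B_kernel K.Ker.span_closed[OF B_kernel] by auto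
  hence "K.dim = card B" by (rule K.Ker.dim_basis[OF fin])
  thus ?thesis using card_image[OF inj] unfolding B_def Z_def by simp
qed

lemma mat_diag_cong:
  assumes "\<And>i. i < n \<Longrightarrow> f i = g i"
  shows "mat_diag n f = mat_diag n g"
  using assms by (intro eq_matI) (auto simp: mat_diag_def)

lemma codim_mat_diag:
  fixes f :: "nat \<Rightarrow> complex"
  shows "codim (mat_diag n f) = card {i. i < n \<and> f i \<noteq> 1}"
proof -
  have "mat_diag n f - 1\<^sub>m n = mat_diag n (\<lambda>i. f i - 1)"
    by (intro eq_matI) (auto simp: mat_diag_def)
  hence "kernel_dim (mat_diag n f - 1\<^sub>m n) = card {i. i < n \<and> f i = 1}"
    by (simp add: kernel_dim_mat_diag)
  moreover have "{i. i < n \<and> f i \<noteq> 1} = {..<n} - {i. i < n \<and> f i = 1}" by auto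
  hence "card {i. i < n \<and> f i \<noteq> 1} = n - card {i. i < n \<and> f i = 1}"
    by (simp add: card_Diff_subset subset_eq)
  ultimately show ?thesis unfolding codim_def by simp
qed

lemma mat_inverse_eqI:
  fixes A B :: "'a :: field mat"
  assumes A: "A \<in> carrier_mat n n" and B: "B \<in> carrier_mat n n"
    and AB: "A * B = 1\<^sub>m n" and BA: "B * A = 1\<^sub>m n"
  shows "mat_inverse A = Some B"
proof (cases "mat_inverse A")
  case None
  have "A \<in> Units (ring_mat TYPE('a) n undefined)"
    using A B AB BA by (auto simp: Units_def ring_mat_def)
  thus ?thesis using mat_inverse(1)[OF A None] by contradiction
next
  case (Some C)
  with mat_inverse(2)[OF A] have C: "C \<in> carrier_mat n n" "C * A = 1\<^sub>m n" by auto
  have "C = C * (A * B)" using C AB by simp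
  also have "\<dots> = B" using assoc_mult_mat[OF C(1) A B] C B by simp
  finally show ?thesis using Some by simp
qed

lemma mat_inverse_mat_diag:
  fixes f :: "nat \<Rightarrow> 'a :: field"
  assumes "\<And>i. i < n \<Longrightarrow> f i \<noteq> 0"
  shows "mat_inverse (mat_diag n f) = Some (mat_diag n (\<lambda>i. inverse (f i)))"
proof (rule mat_inverse_eqI)
  have "mat_diag n f * mat_diag n (\<lambda>i. inverse (f i)) = mat_diag n (\<lambda>_. 1)"
    unfolding mat_diag_diag using assms by (intro mat_diag_cong) simp
  thus "mat_diag n f * mat_diag n (\<lambda>i. inverse (f i)) = 1\<^sub>m n" by simp
  have "mat_diag n (\<lambda>i. inverse (f i)) * mat_diag n f = mat_diag n (\<lambda>_. 1)"
    unfolding mat_diag_diag using assms by (intro mat_diag_cong) simp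
  thus "mat_diag n (\<lambda>i. inverse (f i)) * mat_diag n f = 1\<^sub>m n" by simp
qed auto

lemma Int_empty_if_card_add_le:
  assumes "finite A" and "finite B" and "C \<subseteq> A \<union> B" and "card A + card B \<le> card C"
  shows "A \<inter> B = {}"
proof -
  have "card C \<le> card (A \<union> B)" using assms by (intro card_mono) auto
  hence "card (A \<inter> B) = 0" using card_Un_Int[OF assms(1,2)] assms(4) by simp
  thus ?thesis using assms(1) by simp
qed

lemma codim_le_mat_diag_imp_agree:
  fixes f g :: "nat \<Rightarrow> complex"
  assumes f_nonzero: "\<And>i. i < n \<Longrightarrow> f i \<noteq> 0"
    and le: "codim_le (mat_diag n f) (mat_diag n g)"
    and i: "i < n" and fi: "f i \<noteq> 1"
  shows "g i = f i"
proof -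
  define S where "S = {i. i < n \<and> f i \<noteq> 1}"
  define D where "D = {i. i < n \<and> g i \<noteq> f i}"
  have "the (mat_inverse (mat_diag n f)) * mat_diag n g = mat_diag n (\<lambda>i. inverse (f i) * g i)"
    using mat_inverse_mat_diag[OF f_nonzero] by simp
  moreover have "{i. i < n \<and> inverse (f i) * g i \<noteq> 1} = D"
    using f_nonzero unfolding D_def by (auto simp: field_simps)
  ultimately have "card S + card D = card {i. i < n \<and> g i \<noteq> 1}"
    using le unfolding codim_le_def S_def by (simp add: codim_mat_diag)
  moreover have "{i. i < n \<and> g i \<noteq> 1} \<subseteq> S \<union> D" unfolding S_def D_def by auto
  ultimately have "S \<inter> D = {}"
    by (intro Int_empty_if_card_add_le) (auto simp: S_def D_def)
  thus ?thesis using i fi unfolding S_def D_def by auto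
qed

lemma zeta_power: "zeta m ^ k = cis (2 * pi * real k / real m)"
  by (simp add: zeta_def DeMoivre mult.commute)

lemma zeta_power_mod:
  assumes "m > 0"
  shows "zeta m ^ (k mod m) = zeta m ^ k"
proof -
  have "zeta m ^ m = 1" using assms by (simp add: zeta_power)
  hence "zeta m ^ k = zeta m ^ (k mod m)"
    by (metis div_mult_mod_eq mult.commute power_add power_mult power_one mult_1)
  thus ?thesis by simp
qed

lemma zeta_power_eq_imp_mod_eq:
  assumes m: "m > 0" and eq: "zeta m ^ x = zeta m ^ y"
  shows "x mod m = y mod m"
proof -
  have "inj_on (\<lambda>k. cis (2 * pi * real k / real m)) {..<m}"
    using bij_betw_roots_unity[OF m] by (rule bij_betw_imp_inj_on)
  moreover have "zeta m ^ (x mod m) = zeta m ^ (y mod m)"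
    using eq by (simp add: zeta_power_mod[OF m])
  ultimately show ?thesis using m unfolding zeta_power inj_on_def by simp
qed

lemma diagonal_mat_eqI:
  assumes "a \<in> carrier_mat n n" and "c \<in> carrier_mat n n"
    and "diagonal_mat a" and "diagonal_mat c"
    and "\<And>i. i < n \<Longrightarrow> a $$ (i,i) = c $$ (i,i)"
  shows "a = c"
proof -
  have "a = mat_diag n (\<lambda>i. a $$ (i,i))" using assms(1,3) by (rule diagonal_mat_eq_mat_diag)
  also have "\<dots> = mat_diag n (\<lambda>i. c $$ (i,i))" using assms(5) by (rule mat_diag_cong)
  also have "\<dots> = c" using assms(2,4) by (rule diagonal_mat_eq_mat_diag[symmetric])
  finally show ?thesis .
qed

lemma p_connected_eqI:
  assumes m: "m > 0" and pm: "p dvd m"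
    and a: "a \<in> carrier_mat n n" and c: "c \<in> carrier_mat n n"
    and pa: "p_connected m p a" and pc: "p_connected m p c"
    and agree: "\<And>i. i < n \<Longrightarrow> a $$ (i,i) \<noteq> 1 \<Longrightarrow> c $$ (i,i) = a $$ (i,i)"
  shows "a = c"
proof -
  define Sa where "Sa = {i. i < n \<and> a $$ (i,i) \<noteq> 1}"
  define Sc where "Sc = {i. i < n \<and> c $$ (i,i) \<noteq> 1}"
  obtain ea where da: "diagonal_mat a" and a_ne_1: "a \<noteq> 1\<^sub>m n"
    and ea: "\<And>i. i \<in> Sa \<Longrightarrow> a $$ (i,i) = zeta m ^ ea i" and dvd_a: "p dvd (\<Sum>i\<in>Sa. ea i)"
    using pa a unfolding p_connected_def Let_def Sa_def by auto
  obtain ec where dc: "diagonal_mat c"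
    and ec: "\<And>i. i \<in> Sc \<Longrightarrow> c $$ (i,i) = zeta m ^ ec i"
    and minimal: "\<And>I. I \<noteq> {} \<Longrightarrow> I \<subset> Sc \<Longrightarrow> \<not> p dvd (\<Sum>i\<in>I. ec i)"
    using pc c unfolding p_connected_def Let_def Sc_def by auto
  have "Sa \<subseteq> Sc" using agree unfolding Sa_def Sc_def by auto
  have "Sa \<noteq> {}"
  proof
    assume "Sa = {}"
    hence "a = 1\<^sub>m n" using a da by (intro diagonal_mat_eqI[of _ n]) (auto simp: Sa_def diagonal_mat_def)
    with a_ne_1 show False ..
  qed
  have "ec i mod p = ea i mod p" if i: "i \<in> Sa" for i
  proof -
    have "zeta m ^ ec i = c $$ (i,i)" using i \<open>Sa \<subseteq> Sc\<close> by (auto intro: ec[symmetric])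
    also have "\<dots> = a $$ (i,i)" using agree i unfolding Sa_def by auto
    also have "\<dots> = zeta m ^ ea i" by (rule ea[OF i])
    finally have "ec i mod m = ea i mod m" by (rule zeta_power_eq_imp_mod_eq[OF m])
    thus ?thesis by (metis mod_mod_cancel pm)
  qed
  hence "(\<Sum>i\<in>Sa. ec i) mod p = (\<Sum>i\<in>Sa. ea i) mod p"
    by (metis (no_types, lifting) mod_sum_eq sum.cong)
  hence "p dvd (\<Sum>i\<in>Sa. ec i)" using dvd_a by (simp add: mod_eq_0_iff_dvd[symmetric])
  hence "Sa = Sc" using minimal \<open>Sa \<noteq> {}\<close> \<open>Sa \<subseteq> Sc\<close> by blast
  show "a = c"
  proof (rule diagonal_mat_eqI[OF a c da dc])
    fix i assume "i < n"
    thus "a $$ (i,i) = c $$ (i,i)" using agree \<open>Sa = Sc\<close> unfolding Sa_def Sc_def by fastforce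
  qed
qed

lemma G_m1n_diagonal_entry_nonzero:
  assumes g: "g \<in> G_m1n m n" and dg: "diagonal_mat g" and i: "i < n"
  shows "g $$ (i,i) \<noteq> 0"
proof -
  have "g \<in> carrier_mat n n" and "\<forall>i<n. \<exists>!j. j < n \<and> g $$ (i,j) \<noteq> 0"
    using g unfolding G_m1n_def by auto
  moreover from this(2) i obtain j where "j < n" and "g $$ (i,j) \<noteq> 0" by blast
  ultimately show ?thesis using dg i unfolding diagonal_mat_def by (metis carrier_matD)
qed

lemma p_connected_not_codim_le:
  assumes m: "m > 0" and pm: "p dvd m"
    and aG: "a \<in> G_mpn m p n" and cG: "c \<in> G_mpn m p n"
    and pa: "p_connected m p a" and pc: "p_connected m p c"
    and "a \<noteq> c"
  shows "\<not> codim_le a c"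
proof
  assume le: "codim_le a c"
  have a: "a \<in> carrier_mat n n" and c: "c \<in> carrier_mat n n"
    using aG cG unfolding G_mpn_def G_m1n_def by auto
  have da: "diagonal_mat a" and dc: "diagonal_mat c"
    using pa pc unfolding p_connected_def Let_def by auto
  have nonzero: "\<And>i. i < n \<Longrightarrow> a $$ (i,i) \<noteq> 0"
    using aG da G_m1n_diagonal_entry_nonzero unfolding G_mpn_def by blast
  have "codim_le (mat_diag n (\<lambda>i. a $$ (i,i))) (mat_diag n (\<lambda>i. c $$ (i,i)))"
    using le diagonal_mat_eq_mat_diag[OF a da] diagonal_mat_eq_mat_diag[OF c dc] by simp
  from codim_le_mat_diag_imp_agree[OF nonzero this]
  have "c $$ (i,i) = a $$ (i,i)" if "i < n" "a $$ (i,i) \<noteq> 1" for i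
    using that by simp
  hence "a = c" by (rule p_connected_eqI[OF m pm a c pa pc])
  with \<open>a \<noteq> c\<close> show False ..
qed

theorem mainTheorem5:
  fixes m p n :: nat and a c :: "complex mat"
  assumes "m > 0" and "p > 0" and "n > 0" and "p dvd m"
    and "a \<in> G_mpn m p n" and "c \<in> G_mpn m p n"
    and "p_connected m p a" and "p_connected m p c"
    and "a \<noteq> c"
  shows "\<not> codim_le a c \<and> \<not> codim_le c a"
  using p_connected_not_codim_le[OF assms(1,4,5,6,7,8,9)]
    p_connected_not_codim_le[OF assms(1,4,6,5,8,7) assms(9)[symmetric]] by blast

end
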